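(* Let $n,r\ge 1$ be integers and $N=nr$. Let $\hat{\mathcal{S}}(n\times r)$ be the modular shuffle network defined below. Then $\hat{\mathcal{S}}(n\times r)$ is equivalent to the shuffle network $\mathcal{S}(N)$ in terms of connectivity: for every input group $ap'$ and every output group $bq'$ of $\hat{\mathcal{S}}(n\times r)$ ($a,b\in\{0,\dots,n-1\}$, $p',q'\in\{0,\dots,r-1\}$) there is exactly one fiber path $\hat f(ap'bq',bq'ap')$ joining them, it runs from input $ap'bq'$ to output $bq'ap'$, and, writing $p=ar+p'$ and $q=br+q'$, the correspondence $\hat f(ap'bq',bq'ap')\leftrightarrow f(pq,qp)$ is a bijection between the fibers of $\hat{\mathcal{S}}(n\times r)$ and those of $\mathcal{S}(N)$ preserving which input group and output group each fiber joins.
   Context: For an integer $M\ge1$, the $M^2\times M^2$ shuffle network $\mathcal{S}(M)$ has $M$ input groups and $M$ output groups, each of $M$ ports; input $pq$ denotes the $q$th input of the $p$th input group and output $qp$ denotes the $p$th output of the $q$th output group ($p,q\in\{0,\dots,M-1\}$), and for all $p,q$ input $pq$ is connected by a single fiber $f(pq,qp)$ to output $qp$. Thus exactly one fiber joins each input group to each output group, and the output address is the input address with its two sub-addresses exchanged. The modular shuffle network $\hat{\mathcal{S}}(n\times r)$ is built as follows. It has $N=nr$ input groups labelled $ap'$ and $N$ output groups labelled $bq'$ ($a,b\in\{0,\dots,n-1\}$, $p',q'\in\{0,\dots,r-1\}$). Input group $ap'$ has $N$ inputs split into $n$ subgroups $ap'b$ of $r$ inputs each, the $q'$th input of subgroup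 $ap'b$ being labelled $ap'bq'$; output group $bq'$ has $N$ outputs split into $n$ subgroups $bq'a$ of $r$ outputs each, the $p'$th output of subgroup $bq'a$ being labelled $bq'ap'$. There are $n^2$ copies $\mathcal{S}_{ab}(r)$ ($a,b\in\{0,\dots,n-1\}$) of the $r^2\times r^2$ shuffle network $\mathcal{S}(r)$. Input $ap'bq'$ of $\hat{\mathcal{S}}(n\times r)$ is linked to input $p'q'$ of $\mathcal{S}_{ab}(r)$, and output $bq'ap'$ of $\hat{\mathcal{S}}(n\times r)$ is linked to output $q'p'$ of $\mathcal{S}_{ab}(r)$. *)

theory Defs
  imports Main
begin

(* Nodes of the modular shuffle network \<hat>S(n x r):
   HIn a p' b q'   = input  a p' b q' of \<hat>S (q'-th input of subgroup a p' b of input group a p')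
   HOut b q' a p'  = output b q' a p' of \<hat>S (p'-th output of subgroup b q' a of output group b q')
   SIn a b p' q'   = input  p' q' of the copy S_ab(r)
   SOut a b q' p'  = output q' p' of the copy S_ab(r) *)
datatype node = HIn nat nat nat nat | HOut nat nat nat nat
              | SIn nat nat nat nat | SOut nat nat nat nat

definition hat_edge :: "nat \<Rightarrow> nat \<Rightarrow> node \<Rightarrow> node \<Rightarrow> bool" where
  "hat_edge n r u v \<longleftrightarrow>
     (\<exists>a b p q. a < n \<and> b < n \<and> p < r \<and> q < r \<and>
        ((u = HIn a p b q \<and> v = SIn a b p q) \<or>
         (u = SIn a b p q \<and> v = SOut a b q p) \<or>
         (u = SOut a b q p \<and> v = HOut b q a p)))"

fun is_hin :: "node \<Rightarrow> bool" where
  "is_hin (HIn _ _ _ _) = True" | "is_hin _ = False"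

fun is_hout :: "node \<Rightarrow> bool" where
  "is_hout (HOut _ _ _ _) = True" | "is_hout _ = False"

definition hat_path :: "nat \<Rightarrow> nat \<Rightarrow> node list \<Rightarrow> bool" where
  "hat_path n r xs \<longleftrightarrow> xs \<noteq> [] \<and> is_hin (hd xs) \<and> is_hout (last xs) \<and>
     (\<forall>i. Suc i < length xs \<longrightarrow> hat_edge n r (xs ! i) (xs ! Suc i))"

fun hin_grp :: "node \<Rightarrow> (nat \<times> nat) option" where
  "hin_grp (HIn a p b q) = Some (a, p)" | "hin_grp _ = None"

fun hout_grp :: "node \<Rightarrow> (nat \<times> nat) option" where
  "hout_grp (HOut b q a p) = Some (b, q)" | "hout_grp _ = None"

(* Fibers of the shuffle network S(M): f(pq,qp) represented as ((p,q),(q,p)),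
   i.e. (input address, output address).  Input group = fst (fst f), output group = fst (snd f). *)
definition shuffle_fibers :: "nat \<Rightarrow> ((nat \<times> nat) \<times> (nat \<times> nat)) set" where
  "shuffle_fibers M = {((p, q), (q, p)) | p q. p < M \<and> q < M}"

fun corr_ends :: "nat \<Rightarrow> node \<Rightarrow> node \<Rightarrow> (nat \<times> nat) \<times> (nat \<times> nat)" where
  "corr_ends r (HIn a p' b q') (HOut b2 q2 a2 p2) = ((a*r+p', b*r+q'), (b2*r+q2, a2*r+p2))"
| "corr_ends r _ _ = undefined"

definition corr :: "nat \<Rightarrow> node list \<Rightarrow> (nat \<times> nat) \<times> (nat \<times> nat)" where
  "corr r xs = corr_ends r (hd xs) (last xs)"

end

theory Submission
  imports Defs
begin

(* Every link of the modular network is forced: an input ap'bq' leads only to input p'q' of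
   S_ab(r), whose fiber leads only to output q'p' of S_ab(r), which leads only to output bq'ap'.
   So the fiber paths are exactly these four-node walks, one for each quadruple (a, p', b, q'),
   and the mixed-radix coding p = ar + p', q = br + q' is a bijection from such quadruples
   onto the pairs (p, q) indexing the fibers f(pq, qp) of S(nr). *)

lemma hat_edge_HIn_iff [simp]:
  "hat_edge n r (HIn a p b q) v \<longleftrightarrow> a < n \<and> b < n \<and> p < r \<and> q < r \<and> v = SIn a b p q"
  unfolding hat_edge_def by auto

lemma hat_edge_SIn_iff [simp]:
  "hat_edge n r (SIn a b p q) v \<longleftrightarrow> a < n \<and> b < n \<and> p < r \<and> q < r \<and> v = SOut a b q p"
  unfolding hat_edge_def by auto

lemma hat_edge_SOut_iff [simp]:
  "hat_edge n r (SOut a b q p) v \<longleftrightarrow> a < n \<and> b < n \<and> p < r \<and> q < r \<and> v = HOut b q a p"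
  unfolding hat_edge_def by auto

lemma not_hat_edge_HOut [simp]: "\<not> hat_edge n r (HOut b q a p) v"
  unfolding hat_edge_def by auto

definition hat_fiber :: "nat \<Rightarrow> nat \<Rightarrow> nat \<Rightarrow> nat \<Rightarrow> node list" where
  "hat_fiber a p b q = [HIn a p b q, SIn a b p q, SOut a b q p, HOut b q a p]"

lemma hat_walk_from_HIn:
  assumes "successively (hat_edge n r) (HIn a p b q # ys)"
    and "is_hout (last (HIn a p b q # ys))"
  shows "a < n \<and> b < n \<and> p < r \<and> q < r \<and> HIn a p b q # ys = hat_fiber a p b q"
  using assms unfolding hat_fiber_def
  by (cases ys; cases "tl ys"; cases "tl (tl ys)"; cases "tl (tl (tl ys))")
     (auto simp: successively_Cons)

lemma hat_path_iff:
  "hat_path n r xs \<longleftrightarrow> (\<exists>a<n. \<exists>p<r. \<exists>b<n. \<exists>q<r. xs = hat_fiber a p b q)"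
proof
  assume path: "hat_path n r xs"
  then obtain x ys where xs: "xs = x # ys" and "is_hin x"
    unfolding hat_path_def by (cases xs) auto
  then obtain a p b q where "x = HIn a p b q"
    by (cases x) auto
  with path xs show "\<exists>a<n. \<exists>p<r. \<exists>b<n. \<exists>q<r. xs = hat_fiber a p b q"
    using hat_walk_from_HIn unfolding hat_path_def successively_conv_nth[symmetric] by blast
next
  assume "\<exists>a<n. \<exists>p<r. \<exists>b<n. \<exists>q<r. xs = hat_fiber a p b q"
  then show "hat_path n r xs"
    unfolding hat_path_def successively_conv_nth[symmetric] by (auto simp: hat_fiber_def)
qed

lemma hat_fiber_ends [simp]:
  "hd (hat_fiber a p b q) = HIn a p b q"
  "last (hat_fiber a p b q) = HOut b q a p"
  by (simp_all add: hat_fiber_def)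

lemma corr_hat_fiber [simp]:
  "corr r (hat_fiber a p b q) = ((a * r + p, b * r + q), (b * r + q, a * r + p))"
  by (simp add: corr_def)

lemma bij_betw_corr:
  assumes "0 < r"
  shows "bij_betw (corr r) {xs. hat_path n r xs} (shuffle_fibers (n * r))"
proof (rule bij_betw_byWitness)
  define digits :: "(nat \<times> nat) \<times> (nat \<times> nat) \<Rightarrow> node list" where
    "digits = (\<lambda>((P, Q), _). hat_fiber (P div r) (P mod r) (Q div r) (Q mod r))"
  have code_less: "a * r + p < n * r" if "a < n" "p < r" for a p
    using that assms by (simp add: div_less_iff_less_mult[symmetric])
  show "\<forall>xs\<in>{xs. hat_path n r xs}. digits (corr r xs) = xs"
    by (auto simp: hat_path_iff digits_def)
  show "\<forall>z\<in>shuffle_fibers (n * r). corr r (digits z) = z"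
    by (auto simp: shuffle_fibers_def digits_def)
  show "corr r ` {xs. hat_path n r xs} \<subseteq> shuffle_fibers (n * r)"
    by (auto simp: hat_path_iff shuffle_fibers_def code_less)
  have "hat_path n r (hat_fiber (P div r) (P mod r) (Q div r) (Q mod r))"
    if "P < n * r" "Q < n * r" for P Q
    using that assms unfolding hat_path_iff by (blast intro: less_mult_imp_div_less mod_less_divisor)
  then show "digits ` shuffle_fibers (n * r) \<subseteq> {xs. hat_path n r xs}"
    by (auto simp: shuffle_fibers_def digits_def)
qed

theorem lemma2:
  fixes n r :: nat
  assumes "n \<ge> 1" and "r \<ge> 1"
  shows "(\<forall>a<n. \<forall>b<n. \<forall>p'<r. \<forall>q'<r.
           {xs. hat_path n r xs \<and> hin_grp (hd xs) = Some (a, p') \<and> hout_grp (last xs) = Some (b, q')}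
             = {[HIn a p' b q', SIn a b p' q', SOut a b q' p', HOut b q' a p']})
       \<and> bij_betw (corr r) {xs. hat_path n r xs} (shuffle_fibers (n * r))
       \<and> (\<forall>xs. hat_path n r xs \<longrightarrow>
            (\<forall>a p'. hin_grp (hd xs) = Some (a, p') \<longrightarrow> fst (fst (corr r xs)) = a * r + p')
          \<and> (\<forall>b q'. hout_grp (last xs) = Some (b, q') \<longrightarrow> fst (snd (corr r xs)) = b * r + q'))"
proof (intro conjI)
  show "bij_betw (corr r) {xs. hat_path n r xs} (shuffle_fibers (n * r))"
    using assms(2) by (intro bij_betw_corr) simp
qed (auto simp: hat_path_iff hat_fiber_def[symmetric])

end
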